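(* Let $k\geq2$ and let $L=(l_1,\dots,l_k)$ be generic and reduced positive integers with sum $n$. The vector-valued cocycle $\omega=(\omega_1,\dots,\omega_k)$ takes values in $\Lambda$ and, by evaluation on cycles, induces a group monomorphism $\widehat{\omega}:H_1(Tonn^{n,k}(L);\mathbb{Z})\to\Lambda$.
   Context: $L$ is generic if for all $I,J\subseteq[k]$, $\sum_{i\in I}l_i=\sum_{j\in J}l_j$ implies $I=J$; reduced if $\gcd(l_1,\dots,l_k)=1$. The generalized tonnetz $Tonn^{n,k}(L)$ is the simplicial complex on vertex set $\mathbb{Z}_n$ whose maximal simplices are $\Delta(x;\sigma)=\{x,\,x+l_{\sigma(1)},\dots,x+l_{\sigma(1)}+\dots+l_{\sigma(k-1)}\}$ for $x\in\mathbb{Z}_n$, $\sigma\in S_k$. The $L$-type of an oriented 1-simplex $(u,v)$ is the unique nonempty $I\subseteq[k]$ with $v-u\equiv\sum_{j\in I}l_j\pmod n$. For $i\neq j$, $\theta_{i,j}$ is the integral 1-cocycle with $\theta_{i,j}(X)=\chi_I(i)-\chi_I(j)$ for $X$ of $L$-type $I$, and $\omega_i=\sum_{j\neq i}\theta_{i,j}$; thus $\omega$ assigns to the oriented 1-simplex from $x$ to $x+l_m$ the vector $a_m=ke_m-(1,\dots,1)\in\mathbb{Z}^k$. $\Lambda=\{x\in\mathbb{Z}^k:\sum_i x_i=0\text{ and all }x_i\text{ are congruent mod }k\}$ (a lattice of type $\mathbb{A}^\ast_{k-1}$). *)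

theory Defs
  imports Main "HOL-Combinatorics.Permutations" "HOL-Number_Theory.Cong"
begin

text \<open>The parameter vector L = (l_1,...,l_k) is a list; index i (0-based) stands for l_(i+1).
  Vertices of Z_n are represented by the naturals 0..n-1.\<close>

definition generic :: "nat list \<Rightarrow> bool" where
  "generic L \<longleftrightarrow> (\<forall>I J. I \<subseteq> {0..<length L} \<longrightarrow> J \<subseteq> {0..<length L} \<longrightarrow>
      (\<Sum>i\<in>I. L!i) = (\<Sum>j\<in>J. L!j) \<longrightarrow> I = J)"

definition reduced :: "nat list \<Rightarrow> bool" where
  "reduced L \<longleftrightarrow> Gcd (set L) = 1"

abbreviation tn :: "nat list \<Rightarrow> nat" where "tn L \<equiv> sum_list L"

definition Delta :: "nat list \<Rightarrow> nat \<Rightarrow> (nat \<Rightarrow> nat) \<Rightarrow> nat set" where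
  "Delta L x \<sigma> = {(x + (\<Sum>t<j. L ! (\<sigma> t))) mod tn L | j. j < length L}"

definition is_max_simplex :: "nat list \<Rightarrow> nat set \<Rightarrow> bool" where
  "is_max_simplex L S \<longleftrightarrow> (\<exists>x<tn L. \<exists>\<sigma>. \<sigma> permutes {0..<length L} \<and> S = Delta L x \<sigma>)"

definition tonnetz_simplex :: "nat list \<Rightarrow> nat set \<Rightarrow> bool" where
  "tonnetz_simplex L S \<longleftrightarrow> S \<noteq> {} \<and> (\<exists>M. is_max_simplex L M \<and> S \<subseteq> M)"

text \<open>Oriented 1-simplices used as basis of 1-chains: (u,v) with u < v;
  oriented 2-simplices: (a,b,c) with a < b < c.\<close>
definition edge :: "nat list \<Rightarrow> nat \<Rightarrow> nat \<Rightarrow> bool" where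
  "edge L u v \<longleftrightarrow> u < v \<and> tonnetz_simplex L {u, v}"

definition triangle :: "nat list \<Rightarrow> nat \<Rightarrow> nat \<Rightarrow> nat \<Rightarrow> bool" where
  "triangle L a b c \<longleftrightarrow> a < b \<and> b < c \<and> tonnetz_simplex L {a, b, c}"

definition chain1 :: "nat list \<Rightarrow> (nat \<Rightarrow> nat \<Rightarrow> int) \<Rightarrow> bool" where
  "chain1 L c \<longleftrightarrow> (\<forall>u v. \<not> edge L u v \<longrightarrow> c u v = 0)"

definition chain2 :: "nat list \<Rightarrow> (nat \<Rightarrow> nat \<Rightarrow> nat \<Rightarrow> int) \<Rightarrow> bool" where
  "chain2 L d \<longleftrightarrow> (\<forall>a b c. \<not> triangle L a b c \<longrightarrow> d a b c = 0)"

text \<open>Boundary of a 1-chain (a 0-chain): d[u,v] = v - u.\<close>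
definition bd1 :: "nat list \<Rightarrow> (nat \<Rightarrow> nat \<Rightarrow> int) \<Rightarrow> nat \<Rightarrow> int" where
  "bd1 L c w = (\<Sum>u<tn L. c u w) - (\<Sum>v<tn L. c w v)"

definition cycle1 :: "nat list \<Rightarrow> (nat \<Rightarrow> nat \<Rightarrow> int) \<Rightarrow> bool" where
  "cycle1 L c \<longleftrightarrow> chain1 L c \<and> (\<forall>w. bd1 L c w = 0)"

text \<open>Boundary of a 2-chain: d[a,b,c] = [b,c] - [a,c] + [a,b].\<close>
definition bd2 :: "nat list \<Rightarrow> (nat \<Rightarrow> nat \<Rightarrow> nat \<Rightarrow> int) \<Rightarrow> nat \<Rightarrow> nat \<Rightarrow> int" where
  "bd2 L d u v = (if u < v then
      (\<Sum>w<tn L. d u v w) - (\<Sum>w<tn L. d u w v) + (\<Sum>w<tn L. d w u v) else 0)"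

definition Ltype :: "nat list \<Rightarrow> nat \<Rightarrow> nat \<Rightarrow> nat set" where
  "Ltype L u v = (THE I. I \<subseteq> {0..<length L} \<and> I \<noteq> {} \<and>
      [int v - int u = int (\<Sum>j\<in>I. L!j)] (mod int (tn L)))"

definition theta :: "nat list \<Rightarrow> nat \<Rightarrow> nat \<Rightarrow> nat \<Rightarrow> nat \<Rightarrow> int" where
  "theta L i j u v = (if i \<in> Ltype L u v then 1 else 0) - (if j \<in> Ltype L u v then 1 else 0)"

definition omega :: "nat list \<Rightarrow> nat \<Rightarrow> nat \<Rightarrow> nat \<Rightarrow> int" where
  "omega L i u v = (\<Sum>j\<in>{0..<length L} - {i}. theta L i j u v)"

definition omega_vec :: "nat list \<Rightarrow> nat \<Rightarrow> nat \<Rightarrow> nat \<Rightarrow> int" where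
  "omega_vec L u v = (\<lambda>i. if i < length L then omega L i u v else 0)"

definition omega_eval :: "nat list \<Rightarrow> (nat \<Rightarrow> nat \<Rightarrow> int) \<Rightarrow> nat \<Rightarrow> int" where
  "omega_eval L c = (\<lambda>i. \<Sum>u<tn L. \<Sum>v<tn L. c u v * omega_vec L u v i)"

definition Lambda :: "nat \<Rightarrow> (nat \<Rightarrow> int) set" where
  "Lambda k = {x. (\<forall>i\<ge>k. x i = 0) \<and> (\<Sum>i<k. x i) = 0 \<and>
      (\<forall>i<k. \<forall>j<k. [x i = x j] (mod int k))}"

end

theory Submission
  imports Defs "HOL-Library.Function_Algebras"
begin

text \<open>
  On the maximal simplex \<open>\<Delta>(x;\<sigma>)\<close> label the vertex reached from \<open>x\<close> by the steps
  \<open>\<sigma>(1),\<dots>,\<sigma>(p)\<close> with \<open>k\<chi>\<^sub>A - |A|(1,\<dots>,1)\<close>, where \<open>A = {\<sigma>(1),\<dots>,\<sigma>(p)}\<close>. The value of \<open>\<omega>\<close> on an edge of the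
  simplex is the difference of the labels of its endpoints, so \<open>\<omega>\<close> is a cocycle with values in
  \<open>\<Lambda>\<close> and vanishes on boundaries.

  For \<open>v \<in> \<int>\<^sup>k\<close> the staircase \<open>P(x,v)\<close>
  is the path from \<open>x\<close> making \<open>v\<^sub>1\<close> steps of length \<open>l\<^sub>1\<close>, then \<open>v\<^sub>2\<close> steps of length \<open>l\<^sub>2\<close>, and so
  on. Two steps of different lengths span a square made of two triangles of the complex, so steps
  commute up to boundaries and \<open>P(x,v) + P(x + \<langle>v,l\<rangle>, w) \<sim> P(x, v + w)\<close>. An edge of type \<open>I\<close>
  starting at \<open>x\<close> is homologous to \<open>P(x,\<chi>\<^sub>I)\<close>. As \<open>L\<close> is reduced there is \<open>\<beta>\<close> with
  \<open>\<langle>\<beta>,l\<rangle> = 1\<close>; routing each edge \<open>(u,v)\<close> through the origin along \<open>P(0,u\<beta>)\<close> and \<open>P(0,v\<beta>)\<close>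
  shows that a cycle \<open>z\<close> is homologous to the closed staircase \<open>P(0,h)\<close>, where \<open>h\<^sub>i\<close> counts the
  edges of \<open>z\<close> whose type contains \<open>i\<close>. Now \<open>\<omega>(z) = kh - (\<Sigma>h)(1,\<dots>,1)\<close>, so \<open>\<omega>(z) = 0\<close> forces
  \<open>h\<close> to be constant, and \<open>P(0,(1,\<dots>,1))\<close> is a boundary: it is homologous to two edges of
  complementary types \<open>I\<close> and \<open>[k] - I\<close>, i.e. to one edge traversed forth and back.
\<close>

lemma permutes_with_prefixes:
  assumes "A \<subseteq> B" "B \<subseteq> {0..<k}"
  shows "\<exists>\<sigma>. \<sigma> permutes {0..<k} \<and> \<sigma>`{..<card A} = A \<and> \<sigma>`{..<card B} = B"
proof -
  have fB: "finite B" using assms(2) finite_subset by blast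
  have fA: "finite A" using assms(1) fB finite_subset by blast
  define xs where "xs = sorted_list_of_set A @ sorted_list_of_set (B - A) @ sorted_list_of_set ({0..<k} - B)"
  have dist: "distinct xs" using fA fB assms(1) by (auto simp: xs_def)
  have setxs: "set xs = {0..<k}" using assms fA fB by (auto simp: xs_def)
  have len: "length xs = k" using distinct_card[OF dist] setxs by simp
  define \<sigma> where "\<sigma> t = (if t < k then xs!t else t)" for t
  have "bij_betw ((!) xs) {0..<k} {0..<k}"
    using bij_betw_nth[OF dist] len setxs by (simp add: lessThan_atLeast0)
  then have "bij_betw \<sigma> {0..<k} {0..<k}"
    by (rule bij_betw_cong[THEN iffD1, rotated]) (auto simp: \<sigma>_def)
  then have perm: "\<sigma> permutes {0..<k}"
    by (rule bij_imp_permutes) (auto simp: \<sigma>_def)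
  have img: "\<sigma>`{..<j} = set (take j xs)" if "j \<le> k" for j
  proof -
    have "\<sigma>`{..<j} = (!) xs ` {0..<j}" using that by (auto simp: \<sigma>_def image_def)
    also have "\<dots> = set (take j xs)" using nth_image[of j xs] that len by simp
    finally show ?thesis .
  qed
  have cB: "card B = card A + card (B - A)"
    using fB assms(1) card_Diff_subset[of A B] card_mono[of B A] fA by simp
  have cBk: "card B \<le> k" using card_mono[OF _ assms(2)] by simp
  have "take (card A) xs = sorted_list_of_set A"
    "take (card B) xs = sorted_list_of_set A @ sorted_list_of_set (B - A)"
    by (simp_all add: xs_def cB)
  then have "\<sigma>`{..<card A} = A" "\<sigma>`{..<card B} = B"
    using img[of "card A"] img[of "card B"] cBk cB fA fB assms(1) by auto
  then show ?thesis using perm by blast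
qed

lemma cong_pos_le_imp_eq:
  fixes a b m :: int
  assumes "0 < a" "a \<le> m" "0 < b" "b \<le> m" "[a = b] (mod m)"
  shows "a = b"
  using cong_less_imp_eq_int[of "a - 1" m "b - 1"] cong_diff[OF assms(5) cong_refl[of 1]] assms(1-4)
  by simp

lemma bezout_Gcd_list: "\<exists>\<beta>::nat\<Rightarrow>int. (\<Sum>i<length xs. \<beta> i * int (xs!i)) = int (Gcd (set xs))"
proof (induction xs)
  case Nil then show ?case by simp
next
  case (Cons a xs)
  obtain \<beta> where b: "(\<Sum>i<length xs. \<beta> i * int (xs!i)) = int (Gcd (set xs))" using Cons by blast
  obtain u w where uw: "u * int a + w * int (Gcd (set xs)) = gcd (int a) (int (Gcd (set xs)))"
    using bezout_int by blast
  define \<beta>' where "\<beta>' i = (if i = 0 then u else w * \<beta> (i - 1))" for i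
  have "(\<Sum>i<length (a # xs). \<beta>' i * int ((a # xs)!i)) = u * int a + (\<Sum>i<length xs. w * (\<beta> i * int (xs!i)))"
    unfolding \<beta>'_def by (simp add: sum.lessThan_Suc_shift algebra_simps del: sum.lessThan_Suc)
  also have "\<dots> = u * int a + w * int (Gcd (set xs))" by (simp add: sum_distrib_left[symmetric] b)
  also have "\<dots> = int (Gcd (set (a # xs)))" using uw by (simp add: gcd_int_int_eq)
  finally show ?case by blast
qed

lemma int_induct_by_increments:
  fixes f :: "int \<Rightarrow> 'a::ab_group_add"
  assumes "0 \<in> S" "\<And>x y. x \<in> S \<Longrightarrow> y \<in> S \<Longrightarrow> x + y \<in> S" "\<And>x y. x \<in> S \<Longrightarrow> y \<in> S \<Longrightarrow> x - y \<in> S"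
    and "f 0 \<in> S" "\<And>a. f (a + 1) - f a \<in> S"
  shows "f a \<in> S"
proof (induction a rule: int_induct[where k = 0])
  case (step1 a)
  then show ?case using assms(2)[OF step1(2) assms(5)[of a]] by simp
next
  case (step2 a)
  then show ?case using assms(3)[OF step2(2) assms(5)[of "a - 1"]] by simp
qed (use assms(4) in simp)

lemma sum_fun_apply: "(\<Sum>x\<in>S. f x) a = (\<Sum>x\<in>S. f x a)"
  by (induction S rule: infinite_finite_induct) auto

definition chi :: "nat set \<Rightarrow> nat \<Rightarrow> int" where
  "chi I i = (if i \<in> I then 1 else 0)"

definition dev :: "nat \<Rightarrow> (nat \<Rightarrow> int) \<Rightarrow> nat \<Rightarrow> int" where
  "dev k y i = int k * y i - (\<Sum>m<k. y m)"

lemma sum_dev: "(\<Sum>i<k. dev k y i) = 0"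
  unfolding dev_def by (simp add: sum_subtractf sum_distrib_left)

lemma dev_cong: "[dev k y i = dev k y j] (mod int k)"
proof -
  have "dev k y i - dev k y j = int k * (y i - y j)" unfolding dev_def by (simp add: algebra_simps)
  then show ?thesis by (simp add: cong_iff_dvd_diff)
qed

lemma dev_shift:
  assumes "\<And>m. m < k \<Longrightarrow> y m = a m - b m + c" "i < k"
  shows "dev k y i = dev k a i - dev k b i"
proof -
  have "(\<Sum>m<k. y m) = (\<Sum>m<k. a m - b m + c)" by (rule sum.cong) (simp_all add: assms(1))
  also have "\<dots> = (\<Sum>m<k. a m) - (\<Sum>m<k. b m) + int k * c"
    by (simp add: sum.distrib sum_subtractf)
  finally have sy: "(\<Sum>m<k. y m) = (\<Sum>m<k. a m) - (\<Sum>m<k. b m) + int k * c" .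
  have yi: "y i = a i - b i + c" using assms by simp
  show ?thesis unfolding dev_def sy yi by (simp add: algebra_simps)
qed

lemma dev_eq_0_imp_const:
  assumes "\<And>i. i < k \<Longrightarrow> dev k y i = 0" "i < k" "j < k"
  shows "y i = y j"
proof -
  have "int k * y i = int k * y j" using assms unfolding dev_def by (metis eq_iff_diff_eq_0)
  then show ?thesis using assms(2) by simp
qed

lemma omega_eq_dev: "i < length L \<Longrightarrow> omega L i u v = dev (length L) (chi (Ltype L u v)) i"
  unfolding omega_def theta_def dev_def chi_def
  by (simp add: sum_subtractf sum_diff1 atLeast0LessThan algebra_simps)

definition signed_sum :: "(int \<Rightarrow> 'a::ab_group_add) \<Rightarrow> int \<Rightarrow> int \<Rightarrow> 'a" where
  "signed_sum g a b = (if a \<le> b then (\<Sum>s\<in>{a..<b}. g s) else - (\<Sum>s\<in>{b..<a}. g s))"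

lemma sum_int_atLeastLessThan_concat:
  fixes a b c :: int assumes "a \<le> b" "b \<le> c"
  shows "(\<Sum>s\<in>{a..<b}. g s) + (\<Sum>s\<in>{b..<c}. g s) = (\<Sum>s\<in>{a..<c}. g s)"
proof -
  have "{a..<c} = {a..<b} \<union> {b..<c}" using assms by auto
  then show ?thesis by (simp add: sum.union_disjoint)
qed

lemma signed_sum_add: "signed_sum g a b + signed_sum g b c = signed_sum g a c"
proof -
  consider "a \<le> b" "b \<le> c" | "a \<le> c" "c \<le> b" | "b \<le> a" "a \<le> c" | "b \<le> c" "c \<le> a"
    | "c \<le> a" "a \<le> b" | "c \<le> b" "b \<le> a" by linarith
  then show ?thesis
  proof cases
    case 1 then show ?thesis unfolding signed_sum_def using sum_int_atLeastLessThan_concat[OF 1, of g] by auto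
  next
    case 2 then show ?thesis unfolding signed_sum_def using sum_int_atLeastLessThan_concat[OF 2, of g]
      by (cases "b = c") (auto simp: algebra_simps)
  next
    case 3 then show ?thesis unfolding signed_sum_def using sum_int_atLeastLessThan_concat[OF 3, of g]
      by (cases "a = b") (auto simp: algebra_simps)
  next
    case 4 then show ?thesis unfolding signed_sum_def using sum_int_atLeastLessThan_concat[OF 4, of g]
      by (cases "c = a") (auto simp: algebra_simps)
  next
    case 5 then show ?thesis unfolding signed_sum_def using sum_int_atLeastLessThan_concat[OF 5, of g]
      by (cases "a = c") (auto simp: algebra_simps)
  next
    case 6 then show ?thesis unfolding signed_sum_def using sum_int_atLeastLessThan_concat[OF 6, of g]
      by (cases "b = c"; cases "a = b") (auto simp: algebra_simps)
  qed
qed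

lemma signed_sum_shift: "signed_sum g a b = signed_sum (\<lambda>s. g (s + c)) (a - c) (b - c)"
proof -
  have "(\<Sum>s\<in>{a..<b}. g s) = (\<Sum>s\<in>{a - c..<b - c}. g (s + c))" for a b
    by (rule sum.reindex_bij_witness[of _ "\<lambda>s. s + c" "\<lambda>s. s - c"]) auto
  then show ?thesis unfolding signed_sum_def by auto
qed

lemma signed_sum_same [simp]: "signed_sum g a a = 0" unfolding signed_sum_def by simp

lemma signed_sum_0_1 [simp]: "signed_sum g 0 1 = g 0"
proof -
  have "{0..<1::int} = {0}" by auto
  then show ?thesis unfolding signed_sum_def by simp
qed

section \<open>Simplices and \<open>L\<close>-types\<close>

locale tonnetz =
  fixes L :: "nat list"
  assumes length_ge_2: "length L \<ge> 2" and L_pos: "\<forall>l\<in>set L. l > 0"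
    and L_generic: "generic L" and L_reduced: "reduced L"
begin

abbreviation "n \<equiv> tn L"
abbreviation "k \<equiv> length L"

definition ell :: "nat \<Rightarrow> int" where "ell m = int (L!m)"

definition lsum :: "nat set \<Rightarrow> int" where "lsum I = (\<Sum>i\<in>I. ell i)"

lemma lsum_eq_of_nat: "lsum I = int (\<Sum>j\<in>I. L!j)" by (simp add: lsum_def ell_def)

lemma n_eq_lsum: "int n = lsum {0..<k}"
  unfolding lsum_def ell_def by (simp add: sum_list_sum_nth)

lemma lsum_nonneg: "lsum I \<ge> 0" unfolding lsum_def ell_def by (simp add: sum_nonneg)

lemma lsum_pos: assumes "I \<subseteq> {0..<k}" "I \<noteq> {}" shows "lsum I > 0"
proof -
  have "finite I" using assms(1) finite_subset by blast
  then show ?thesis unfolding lsum_def ell_def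
    using assms L_pos nth_mem by (intro sum_pos) (auto simp: subset_iff)
qed

lemma lsum_subset_diff: assumes "A \<subseteq> B" "B \<subseteq> {0..<k}" shows "lsum B = lsum A + lsum (B - A)"
proof -
  have "finite B" using assms(2) finite_subset by blast
  then show ?thesis unfolding lsum_def using assms(1) by (simp add: sum.subset_diff[of A B])
qed

lemma lsum_le_n: "I \<subseteq> {0..<k} \<Longrightarrow> lsum I \<le> int n"
  using lsum_subset_diff[of I "{0..<k}"] lsum_nonneg n_eq_lsum by fastforce

lemma lsum_less_n: assumes "I \<subseteq> {0..<k}" "I \<noteq> {0..<k}" shows "lsum I < int n"
  using lsum_subset_diff[OF assms(1)] lsum_pos[of "{0..<k} - I"] n_eq_lsum assms by auto

lemma n_pos: "n > 0"
  using lsum_pos[of "{0..<k}"] n_eq_lsum length_ge_2 by fastforce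

definition vert :: "int \<Rightarrow> nat" where "vert y = nat (y mod int n)"

lemma vert_less: "vert y < n" unfolding vert_def using n_pos by (simp add: nat_less_iff)

lemma int_vert: "int (vert y) = y mod int n" unfolding vert_def using n_pos by simp

lemma vert_int: "u < n \<Longrightarrow> vert (int u) = u" unfolding vert_def by simp

lemma vert_eq_iff: "vert a = vert b \<longleftrightarrow> a mod int n = b mod int n"
  by (metis int_vert of_nat_eq_iff)

lemma vert_periodic: "vert (y + int n * c) = vert y" by (simp add: vert_eq_iff)

lemma vert_vert_add: "vert (int (vert x) + d) = vert (x + d)"
  by (simp add: vert_eq_iff int_vert mod_add_left_eq)

lemma vert_shift_neq: assumes "0 < d" "d < int n" shows "vert y \<noteq> vert (y + d)"
proof
  assume "vert y = vert (y + d)"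
  then have "int n dvd d" by (simp add: vert_eq_iff mod_eq_dvd_iff)
  with assms show False using zdvd_imp_le by fastforce
qed

definition psum :: "(nat \<Rightarrow> nat) \<Rightarrow> nat \<Rightarrow> int" where "psum \<sigma> p = (\<Sum>t<p. ell (\<sigma> t))"

lemma sum_ell_image: assumes "\<sigma> permutes {0..<k}" shows "(\<Sum>t\<in>T. ell (\<sigma> t)) = lsum (\<sigma> ` T)"
  unfolding lsum_def by (subst sum.reindex) (auto intro: permutes_inj_on[OF assms])

lemma psum_split: assumes "p \<le> q" shows "psum \<sigma> q = psum \<sigma> p + (\<Sum>t\<in>{p..<q}. ell (\<sigma> t))"
proof -
  have "{..<q} = {..<p} \<union> {p..<q}" using assms by auto
  then have "psum \<sigma> q = (\<Sum>t\<in>{..<p} \<union> {p..<q}. ell (\<sigma> t))" unfolding psum_def by simp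
  also have "\<dots> = psum \<sigma> p + (\<Sum>t\<in>{p..<q}. ell (\<sigma> t))" unfolding psum_def
    by (rule sum.union_disjoint) auto
  finally show ?thesis .
qed

lemma Delta_eq_vert: assumes "x < n" shows "Delta L x \<sigma> = {vert (int x + psum \<sigma> j) | j. j < k}"
proof -
  have "(x + (\<Sum>t<j. L ! (\<sigma> t))) mod n = vert (int x + psum \<sigma> j)" for j
    using assms unfolding vert_def psum_def ell_def by (simp add: nat_mod_as_int)
  then show ?thesis unfolding Delta_def by simp
qed

lemma simplex_positions:
  assumes "tonnetz_simplex L S"
  obtains x \<sigma> where "\<sigma> permutes {0..<k}" "\<And>w. w \<in> S \<Longrightarrow> \<exists>p<k. w = vert (x + psum \<sigma> p)"
proof -
  from assms obtain M where M: "is_max_simplex L M" "S \<subseteq> M" unfolding tonnetz_simplex_def by blast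
  then obtain x \<sigma> where x: "x < n" "\<sigma> permutes {0..<k}" "M = Delta L x \<sigma>"
    unfolding is_max_simplex_def by blast
  then show thesis using that[of \<sigma> "int x"] M(2) Delta_eq_vert by blast
qed

lemma simplex_vertex_less: assumes "tonnetz_simplex L S" "w \<in> S" shows "w < n"
  using simplex_positions[OF assms(1)] assms(2) vert_less by metis

lemma edge_positions:
  assumes "tonnetz_simplex L {u, v}" "u \<noteq> v"
  obtains x \<sigma> p q where "\<sigma> permutes {0..<k}" "p < k" "q < k" "p \<noteq> q"
    "u = vert (x + psum \<sigma> p)" "v = vert (x + psum \<sigma> q)"
proof -
  obtain \<sigma> x where s: "\<sigma> permutes {0..<k}" "\<And>w. w \<in> {u,v} \<Longrightarrow> \<exists>p<k. w = vert (x + psum \<sigma> p)"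
    by (rule simplex_positions[OF assms(1)]) blast
  obtain p q where "p < k" "u = vert (x + psum \<sigma> p)" "q < k" "v = vert (x + psum \<sigma> q)"
    using s(2) by blast
  then show thesis using that s(1) assms(2) by blast
qed

lemma flag_in_max_simplex:
  assumes "A \<subseteq> B" "B \<subseteq> {0..<k}" "B \<noteq> {0..<k}"
  shows "\<exists>M. is_max_simplex L M \<and> vert x \<in> M \<and> vert (x + lsum A) \<in> M \<and> vert (x + lsum B) \<in> M"
proof -
  obtain \<sigma> where s: "\<sigma> permutes {0..<k}" "\<sigma>`{..<card A} = A" "\<sigma>`{..<card B} = B"
    using permutes_with_prefixes[OF assms(1,2)] by blast
  have psum_lsum: "psum \<sigma> p = lsum (\<sigma> ` {..<p})" for p
    unfolding psum_def using sum_ell_image[OF s(1)] .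
  have fB: "finite B" using assms(2) finite_subset by blast
  have cB: "card B < k" using psubset_card_mono[of "{0..<k}" B] assms by auto
  have cA: "card A < k" using card_mono[OF fB assms(1)] cB by simp
  define M where "M = Delta L (vert x) \<sigma>"
  have M: "M = {vert (x + psum \<sigma> j) | j. j < k}"
    unfolding M_def using Delta_eq_vert[OF vert_less] vert_vert_add by simp
  have "is_max_simplex L M" unfolding is_max_simplex_def M_def using vert_less s(1) by blast
  moreover have "vert x \<in> M" unfolding M using length_ge_2 by (auto intro!: exI[of _ 0] simp: psum_def)
  moreover have "vert (x + lsum A) \<in> M" unfolding M using cA psum_lsum[of "card A"] s(2)
    by (auto intro!: exI[of _ "card A"])
  moreover have "vert (x + lsum B) \<in> M" unfolding M using cB psum_lsum[of "card B"] s(3)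
    by (auto intro!: exI[of _ "card B"])
  ultimately show ?thesis by blast
qed

lemma Ltype_unique:
  assumes "I \<subseteq> {0..<k}" "I \<noteq> {}" "[int v - int u = lsum I] (mod int n)"
  shows "Ltype L u v = I"
  unfolding Ltype_def
proof (rule the_equality)
  show "I \<subseteq> {0..<k} \<and> I \<noteq> {} \<and> [int v - int u = int (\<Sum>j\<in>I. L ! j)] (mod int (tn L))"
    using assms lsum_eq_of_nat by simp
next
  fix J assume J: "J \<subseteq> {0..<k} \<and> J \<noteq> {} \<and> [int v - int u = int (\<Sum>j\<in>J. L ! j)] (mod int (tn L))"
  then have "[lsum J = lsum I] (mod int n)"
    using assms(3) by (metis cong_sym cong_trans lsum_eq_of_nat)
  moreover have "0 < lsum J" "lsum J \<le> int n" "0 < lsum I" "lsum I \<le> int n"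
    using lsum_pos lsum_le_n J assms by auto
  ultimately have "lsum J = lsum I" using cong_pos_le_imp_eq by blast
  then have "(\<Sum>j\<in>J. L!j) = (\<Sum>j\<in>I. L!j)" by (simp only: lsum_eq_of_nat of_nat_eq_iff)
  then show "J = I" using L_generic J assms(1) unfolding generic_def by blast
qed

text \<open>The type of the edge from position \<open>p\<close> to position \<open>q\<close> of the maximal simplex \<open>\<Delta>(x;\<sigma>)\<close>.\<close>

definition pos_type :: "(nat \<Rightarrow> nat) \<Rightarrow> nat \<Rightarrow> nat \<Rightarrow> nat set" where
  "pos_type \<sigma> p q = (if p < q then \<sigma>`{p..<q} else {0..<k} - \<sigma>`{q..<p})"

lemma pos_type_props:
  assumes s: "\<sigma> permutes {0..<k}" and pq: "p < k" "q < k" "p \<noteq> q"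
  shows "pos_type \<sigma> p q \<subseteq> {0..<k}" "pos_type \<sigma> p q \<noteq> {}" "pos_type \<sigma> p q \<noteq> {0..<k}"
    "[psum \<sigma> q - psum \<sigma> p = lsum (pos_type \<sigma> p q)] (mod int n)"
proof -
  have inj: "inj \<sigma>" using permutes_inj[OF s] .
  have mem: "\<And>t. \<sigma> t \<in> {0..<k} \<longleftrightarrow> t \<in> {0..<k}" using permutes_in_image[OF s] by blast
  have \<sigma>pq: "\<sigma> p \<in> {0..<k}" "\<sigma> q \<in> {0..<k}" using mem pq by simp_all
  have "{p..<q} \<subseteq> {0..<k}" using pq by auto
  then have "\<sigma>`{p..<q} \<subseteq> {0..<k}" using mem by blast
  then show "pos_type \<sigma> p q \<subseteq> {0..<k}" unfolding pos_type_def by auto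
  show "pos_type \<sigma> p q \<noteq> {}"
  proof (cases "p < q")
    case False
    then have "\<sigma> p \<in> pos_type \<sigma> p q" using \<sigma>pq(1) inj by (auto simp: pos_type_def inj_eq)
    then show ?thesis by blast
  qed (auto simp: pos_type_def)
  show "pos_type \<sigma> p q \<noteq> {0..<k}"
  proof -
    have "\<sigma> q \<notin> pos_type \<sigma> p q" using pq inj by (auto simp: pos_type_def inj_eq)
    then show ?thesis using \<sigma>pq(2) by blast
  qed
  show "[psum \<sigma> q - psum \<sigma> p = lsum (pos_type \<sigma> p q)] (mod int n)"
  proof (cases "p < q")
    case True
    then show ?thesis unfolding pos_type_def using psum_split[of p q \<sigma>] sum_ell_image[OF s] by simp
  next
    case False
    then have qp: "q < p" using pq by auto
    have "{q..<p} \<subseteq> {0..<k}" using pq by auto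
    then have sub: "\<sigma>`{q..<p} \<subseteq> {0..<k}" using mem by blast
    have "psum \<sigma> q - psum \<sigma> p = - lsum (\<sigma>`{q..<p})"
      using psum_split[of q p \<sigma>] qp sum_ell_image[OF s] by simp
    also have "\<dots> = lsum ({0..<k} - \<sigma>`{q..<p}) - int n"
      using lsum_subset_diff[OF sub] n_eq_lsum by simp
    finally show ?thesis unfolding pos_type_def using False by (simp add: cong_iff_dvd_diff)
  qed
qed

lemma chi_pos_type:
  assumes s: "\<sigma> permutes {0..<k}" and pq: "p < k" "q < k" "p \<noteq> q" and i: "i < k"
  shows "chi (pos_type \<sigma> p q) i = chi (\<sigma>`{..<q}) i - chi (\<sigma>`{..<p}) i + (if q < p then 1 else 0)"
proof -
  have inj: "inj \<sigma>" using permutes_inj[OF s] .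
  have split: "\<sigma>`{..<b} = \<sigma>`{..<a} \<union> \<sigma>`{a..<b}" "\<sigma>`{..<a} \<inter> \<sigma>`{a..<b} = {}" if "a < b" for a b
    using that by (auto simp: image_Un[symmetric] ivl_disj_un inj_eq[OF inj])
  show ?thesis
  proof (cases "p < q")
    case True
    then show ?thesis using split[OF True] unfolding pos_type_def chi_def by auto
  next
    case False
    then have "q < p" using pq by auto
    then show ?thesis using split[OF \<open>q < p\<close>] False i unfolding pos_type_def chi_def by auto
  qed
qed

lemma vert_diff_pos_type:
  assumes "\<sigma> permutes {0..<k}" "p < k" "q < k" "p \<noteq> q"
  shows "[int (vert (x + psum \<sigma> q)) - int (vert (x + psum \<sigma> p)) = lsum (pos_type \<sigma> p q)] (mod int n)"
proof -
  have "[int (vert (x + psum \<sigma> q)) - int (vert (x + psum \<sigma> p)) = psum \<sigma> q - psum \<sigma> p] (mod int n)"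
    unfolding int_vert cong_def by (simp add: mod_diff_eq)
  then show ?thesis using pos_type_props(4)[OF assms] by (rule cong_trans)
qed

lemma Ltype_pos:
  assumes "\<sigma> permutes {0..<k}" "p < k" "q < k" "p \<noteq> q"
  shows "Ltype L (vert (x + psum \<sigma> p)) (vert (x + psum \<sigma> q)) = pos_type \<sigma> p q"
  using Ltype_unique vert_diff_pos_type[OF assms] pos_type_props(1,2)[OF assms] by blast

lemma edge_Ltype:
  assumes "tonnetz_simplex L {u, v}" "u \<noteq> v"
  shows "Ltype L u v \<subseteq> {0..<k}" "Ltype L u v \<noteq> {}" "Ltype L u v \<noteq> {0..<k}"
    "[int v - int u = lsum (Ltype L u v)] (mod int n)"
proof -
  obtain x \<sigma> p q where e: "\<sigma> permutes {0..<k}" "p < k" "q < k" "p \<noteq> q"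
    "u = vert (x + psum \<sigma> p)" "v = vert (x + psum \<sigma> q)"
    by (rule edge_positions[OF assms])
  have T: "Ltype L u v = pos_type \<sigma> p q" unfolding e(5,6) by (rule Ltype_pos[OF e(1-4)])
  show "Ltype L u v \<subseteq> {0..<k}" "Ltype L u v \<noteq> {}" "Ltype L u v \<noteq> {0..<k}"
    unfolding T using pos_type_props[OF e(1-4)] by auto
  show "[int v - int u = lsum (Ltype L u v)] (mod int n)"
    unfolding T using vert_diff_pos_type[OF e(1-4), of x] e(5,6) by simp
qed

section \<open>The cocycle \<open>\<omega>\<close>\<close>

lemma omega_pos:
  assumes s: "\<sigma> permutes {0..<k}" and pq: "p < k" "q < k" "p \<noteq> q" and i: "i < k"
  shows "omega L i (vert (x + psum \<sigma> p)) (vert (x + psum \<sigma> q))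
       = dev k (chi (\<sigma>`{..<q})) i - dev k (chi (\<sigma>`{..<p})) i"
  unfolding omega_eq_dev[OF i] Ltype_pos[OF s pq]
  by (rule dev_shift[OF _ i]) (rule chi_pos_type[OF s pq])

lemma omega_vec_in_Lambda:
  assumes "tonnetz_simplex L {u, v}" "u \<noteq> v"
  shows "omega_vec L u v \<in> Lambda k"
proof -
  have om: "omega_vec L u v i = (if i < k then dev k (chi (Ltype L u v)) i else 0)" for i
    unfolding omega_vec_def using omega_eq_dev by simp
  then show ?thesis unfolding Lambda_def using sum_dev dev_cong by simp
qed

lemma omega_cocycle:
  assumes "triangle L a b c" "i < k"
  shows "omega L i a b - omega L i a c + omega L i b c = 0"
proof -
  have t: "tonnetz_simplex L {a, b, c}" "a < b" "b < c" using assms(1) unfolding triangle_def by auto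
  obtain \<sigma> x where s: "\<sigma> permutes {0..<k}" "\<And>w. w \<in> {a,b,c} \<Longrightarrow> \<exists>p<k. w = vert (x + psum \<sigma> p)"
    by (rule simplex_positions[OF t(1)]) blast
  obtain pa pb pc where p: "pa < k" "a = vert (x + psum \<sigma> pa)" "pb < k" "b = vert (x + psum \<sigma> pb)"
    "pc < k" "c = vert (x + psum \<sigma> pc)"
    using s(2) by (metis insertCI)
  then have "pa \<noteq> pb" "pa \<noteq> pc" "pb \<noteq> pc" using t by auto
  then show ?thesis unfolding p(2,4,6) using omega_pos[OF s(1)] p(1,3,5) assms(2) by simp
qed

lemma sum_bd2_mult:
  assumes "chain2 L d"
  shows "(\<Sum>u<n. \<Sum>v<n. bd2 L d u v * w u v)
       = (\<Sum>u<n. \<Sum>v<n. \<Sum>x<n. d u v x * (w u v - w u x + w v x))"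
proof -
  have tri: "d a b c \<noteq> 0 \<Longrightarrow> a < b \<and> b < c" for a b c
    using assms unfolding chain2_def triangle_def by blast
  have trm: "bd2 L d u v * w u v =
     (\<Sum>x<n. d u v x * w u v) - (\<Sum>x<n. d u x v * w u v) + (\<Sum>x<n. d x u v * w u v)" for u v
  proof (cases "u < v")
    case True then show ?thesis unfolding bd2_def by (simp only: if_True sum_distrib_right ring_distribs)
  next
    case False
    then have "d u v x = 0" "d u x v = 0" "d x u v = 0" for x
      using tri[of u v x] tri[of u x v] tri[of x u v] by (auto dest: less_trans)
    then show ?thesis unfolding bd2_def using False by simp
  qed
  have swap1: "(\<Sum>u<n. \<Sum>v<n. \<Sum>x<n. d u x v * w u v) = (\<Sum>u<n. \<Sum>v<n. \<Sum>x<n. d u v x * w u x)"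
    by (rule sum.cong[OF refl], rule sum.swap)
  have swap2: "(\<Sum>u<n. \<Sum>v<n. \<Sum>x<n. d x u v * w u v) = (\<Sum>u<n. \<Sum>v<n. \<Sum>x<n. d u v x * w v x)"
    by (subst sum.swap) (rule sum.swap)
  show ?thesis
    unfolding trm sum.distrib sum_subtractf swap1 swap2 by (simp add: ring_distribs sum.distrib sum_subtractf)
qed

lemma omega_eval_bd2:
  assumes "chain2 L d"
  shows "omega_eval L (bd2 L d) = (\<lambda>_. 0)"
proof
  fix i
  show "omega_eval L (bd2 L d) i = 0"
  proof (cases "i < k")
    case True
    have "omega_eval L (bd2 L d) i = (\<Sum>u<n. \<Sum>v<n. bd2 L d u v * omega L i u v)"
      unfolding omega_eval_def omega_vec_def using True by simp
    also have "\<dots> = (\<Sum>u<n. \<Sum>v<n. \<Sum>x<n. d u v x * (omega L i u v - omega L i u x + omega L i v x))"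
      by (rule sum_bd2_mult[OF assms])
    also have "\<dots> = 0"
    proof -
      have zero: "d a b c * (omega L i a b - omega L i a c + omega L i b c) = 0" for a b c
        using assms omega_cocycle[OF _ True] unfolding chain2_def by (cases "triangle L a b c") auto
      show ?thesis by (simp only: zero sum.neutral_const)
    qed
    finally show ?thesis .
  qed (simp add: omega_eval_def omega_vec_def)
qed

section \<open>Boundaries\<close>

text \<open>1-chains carry coefficients only on pairs \<open>u < v\<close> (see \<open>chain1\<close>), so the edge from \<open>a\<close> to
  \<open>b < a\<close> is stored with coefficient \<open>-1\<close> at \<open>(b,a)\<close>.\<close>

definition arc :: "nat \<Rightarrow> nat \<Rightarrow> nat \<Rightarrow> nat \<Rightarrow> int" where
  "arc a b = (\<lambda>u v. if a < b \<and> u = a \<and> v = b then 1 else if b < a \<and> u = b \<and> v = a then -1 else 0)"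

lemma arc_swap: "arc b a = - arc a b"
  unfolding arc_def by (rule ext)+ auto

definition cscale :: "int \<Rightarrow> (nat \<Rightarrow> nat \<Rightarrow> int) \<Rightarrow> nat \<Rightarrow> nat \<Rightarrow> int" where
  "cscale c z = (\<lambda>u v. c * z u v)"

lemma cscale_0_left: "cscale 0 z = 0" unfolding cscale_def by (rule ext)+ simp
lemma cscale_0_right: "cscale c 0 = 0" unfolding cscale_def by (rule ext)+ simp
lemma cscale_1: "cscale 1 z = z" unfolding cscale_def by (rule ext)+ simp
lemma cscale_add_left: "cscale (c + d) z = cscale c z + cscale d z"
  unfolding cscale_def by (rule ext)+ (simp add: algebra_simps)
lemma cscale_add_right: "cscale c (a + b) = cscale c a + cscale c b"
  unfolding cscale_def by (rule ext)+ (simp add: algebra_simps)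
lemma cscale_diff_right: "cscale c (a - b) = cscale c a - cscale c b"
  unfolding cscale_def by (rule ext)+ (simp add: algebra_simps)

definition boundaries :: "(nat \<Rightarrow> nat \<Rightarrow> int) set" where
  "boundaries = {z. \<exists>d. chain2 L d \<and> z = bd2 L d}"

lemma zero_in_boundaries: "0 \<in> boundaries"
proof -
  have "(0::nat\<Rightarrow>nat\<Rightarrow>int) = bd2 L (\<lambda>_ _ _. 0)" unfolding bd2_def by (rule ext)+ simp
  then show ?thesis unfolding boundaries_def chain2_def by (intro CollectI exI[of _ "\<lambda>_ _ _. 0"]) simp
qed

lemma boundaries_add: assumes "a \<in> boundaries" "b \<in> boundaries" shows "a + b \<in> boundaries"
proof -
  obtain d1 d2 where d: "chain2 L d1" "a = bd2 L d1" "chain2 L d2" "b = bd2 L d2"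
    using assms unfolding boundaries_def by blast
  have "a + b = bd2 L (\<lambda>x y z. d1 x y z + d2 x y z)"
    unfolding d(2,4) bd2_def by (rule ext)+ (simp add: sum.distrib)
  moreover have "chain2 L (\<lambda>x y z. d1 x y z + d2 x y z)" using d unfolding chain2_def by simp
  ultimately show ?thesis unfolding boundaries_def by blast
qed

lemma boundaries_cscale: assumes "a \<in> boundaries" shows "cscale c a \<in> boundaries"
proof -
  obtain d where d: "chain2 L d" "a = bd2 L d" using assms unfolding boundaries_def by blast
  have "cscale c a = bd2 L (\<lambda>x y z. c * d x y z)"
    unfolding d(2) bd2_def cscale_def by (rule ext)+ (simp add: sum_distrib_left algebra_simps)
  moreover have "chain2 L (\<lambda>x y z. c * d x y z)" using d unfolding chain2_def by simp
  ultimately show ?thesis unfolding boundaries_def by blast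
qed

lemma boundaries_uminus: "a \<in> boundaries \<Longrightarrow> - a \<in> boundaries"
  using boundaries_cscale[of a "-1"] by (simp add: cscale_def fun_Compl_def)

lemma boundaries_diff: "a \<in> boundaries \<Longrightarrow> b \<in> boundaries \<Longrightarrow> a - b \<in> boundaries"
  using boundaries_add[of a "- b"] boundaries_uminus[of b] by simp

definition homologous :: "(nat \<Rightarrow> nat \<Rightarrow> int) \<Rightarrow> (nat \<Rightarrow> nat \<Rightarrow> int) \<Rightarrow> bool" (infix "\<approx>" 50) where
  "a \<approx> b \<longleftrightarrow> a - b \<in> boundaries"

lemma homologous_refl: "a \<approx> a" unfolding homologous_def using zero_in_boundaries by simp

lemma homologous_sym: "a \<approx> b \<Longrightarrow> b \<approx> a"
  unfolding homologous_def using boundaries_uminus by fastforce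

lemma homologous_trans [trans]: "a \<approx> b \<Longrightarrow> b \<approx> c \<Longrightarrow> a \<approx> c"
  unfolding homologous_def using boundaries_add by fastforce

lemma eq_homologous_trans [trans]: "a = b \<Longrightarrow> b \<approx> c \<Longrightarrow> a \<approx> c" by simp
lemma homologous_eq_trans [trans]: "a \<approx> b \<Longrightarrow> b = c \<Longrightarrow> a \<approx> c" by simp

lemma homologous_add: "a \<approx> a' \<Longrightarrow> b \<approx> b' \<Longrightarrow> a + b \<approx> a' + b'"
  unfolding homologous_def using boundaries_add by (fastforce simp: algebra_simps)

lemma homologous_diff: "a \<approx> a' \<Longrightarrow> b \<approx> b' \<Longrightarrow> a - b \<approx> a' - b'"
  unfolding homologous_def using boundaries_diff by (fastforce simp: algebra_simps)

lemma homologous_cscale: "a \<approx> b \<Longrightarrow> cscale c a \<approx> cscale c b"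
  unfolding homologous_def using boundaries_cscale by (fastforce simp: cscale_diff_right[symmetric])

lemma homologous_sum:
  "finite S \<Longrightarrow> (\<And>x. x \<in> S \<Longrightarrow> f x \<approx> g x) \<Longrightarrow> (\<Sum>x\<in>S. f x) \<approx> (\<Sum>x\<in>S. g x)"
  by (induction S rule: finite_induct) (auto intro: homologous_add homologous_refl)

lemma triangle_boundary_sorted:
  assumes "p < q" "q < r" "tonnetz_simplex L {p, q, r}"
  shows "arc p q + arc q r + arc r p \<in> boundaries"
proof -
  define d where "d a b c = (if a = p \<and> b = q \<and> c = r then (1::int) else 0)" for a b c
  have "p < n" "q < n" "r < n" using simplex_vertex_less[OF assms(3)] by auto
  then have "(\<Sum>w<n. d u v w) = (if u = p \<and> v = q then 1 else 0)"
    "(\<Sum>w<n. d u w v) = (if u = p \<and> v = r then 1 else 0)"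
    "(\<Sum>w<n. d w u v) = (if u = q \<and> v = r then 1 else 0)" for u v
    unfolding d_def by (cases "u = p \<and> v = q"; cases "u = p \<and> v = r"; cases "u = q \<and> v = r"; auto)+
  then have "arc p q + arc q r + arc r p = bd2 L d"
    unfolding bd2_def arc_def using assms(1,2) by (intro ext) auto
  moreover have "chain2 L d" unfolding chain2_def triangle_def d_def using assms by auto
  ultimately show ?thesis unfolding boundaries_def by blast
qed

lemma triangle_boundary:
  assumes "tonnetz_simplex L {a, b, c}" "a \<noteq> b" "b \<noteq> c" "a \<noteq> c"
  shows "arc a b + arc b c + arc c a \<in> boundaries"
proof -
  let ?T = "\<lambda>a b c. arc a b + arc b c + arc c a \<in> boundaries"
  have rotate: "?T b c a \<Longrightarrow> ?T a b c" for a b c by (simp add: algebra_simps)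
  have reverse: "?T a c b \<Longrightarrow> ?T a b c" for a b c
    using boundaries_uminus[of "arc a c + arc c b + arc b a"] by (simp add: arc_swap[of a c] arc_swap[of c b] arc_swap[of b a] algebra_simps)
  have sorted: "?T x y z" if "x < y" "y < z" "{x, y, z} = {a, b, c}" for x y z
    using triangle_boundary_sorted[OF that(1,2)] assms(1) that(3) by simp
  consider "a < b" "b < c" | "a < c" "c < b" | "b < a" "a < c" | "b < c" "c < a" | "c < a" "a < b" | "c < b" "b < a"
    using assms(2-4) by linarith
  then show ?thesis
  proof cases
    case 1 show ?thesis by (rule sorted) (use 1 in auto)
  next
    case 2 show ?thesis by (rule reverse, rule sorted) (use 2 in auto)
  next
    case 3 show ?thesis by (rule rotate, rule reverse, rule sorted) (use 3 in auto)
  next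
    case 4 show ?thesis by (rule rotate, rule sorted) (use 4 in auto)
  next
    case 5 show ?thesis by (rule rotate, rule rotate, rule sorted) (use 5 in auto)
  next
    case 6 show ?thesis by (rule reverse, rule rotate, rule sorted) (use 6 in auto)
  qed
qed

lemma flag_triangle_boundary:
  assumes "A \<subseteq> B" "B \<subseteq> {0..<k}" "B \<noteq> {0..<k}" "A \<noteq> {}" "A \<noteq> B"
  shows "arc (vert x) (vert (x + lsum A)) + arc (vert (x + lsum A)) (vert (x + lsum B))
    + arc (vert (x + lsum B)) (vert x) \<in> boundaries"
proof (rule triangle_boundary)
  obtain M where M: "is_max_simplex L M" "vert x \<in> M" "vert (x + lsum A) \<in> M" "vert (x + lsum B) \<in> M"
    using flag_in_max_simplex[OF assms(1-3)] by blast
  then show "tonnetz_simplex L {vert x, vert (x + lsum A), vert (x + lsum B)}"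
    unfolding tonnetz_simplex_def by blast
  have BA: "B - A \<subseteq> {0..<k}" "B - A \<noteq> {}" "A \<subseteq> {0..<k}" using assms by blast+
  have B: "lsum B = lsum A + lsum (B - A)" "lsum B < int n"
    using lsum_subset_diff[OF assms(1,2)] lsum_less_n[OF assms(2,3)] .
  have "0 < lsum A" "0 < lsum (B - A)" using lsum_pos BA assms(4) by auto
  with B have bounds: "0 < lsum A" "lsum A < int n" "0 < lsum (B - A)" "lsum (B - A) < int n" "0 < lsum B"
    by linarith+
  show "vert x \<noteq> vert (x + lsum A)" using vert_shift_neq bounds by blast
  show "vert x \<noteq> vert (x + lsum B)" using vert_shift_neq bounds B(2) by blast
  show "vert (x + lsum A) \<noteq> vert (x + lsum B)"
    using vert_shift_neq[of "lsum (B - A)" "x + lsum A"] B(1) bounds by (simp add: add.assoc)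
qed

section \<open>Staircase paths\<close>

definition ustep :: "int \<Rightarrow> nat \<Rightarrow> nat \<Rightarrow> nat \<Rightarrow> int" where
  "ustep y m = arc (vert y) (vert (y + ell m))"

definition ray :: "int \<Rightarrow> nat \<Rightarrow> int \<Rightarrow> nat \<Rightarrow> nat \<Rightarrow> int" where
  "ray y m a = signed_sum (\<lambda>s. ustep (y + s * ell m) m) 0 a"

lemma ray_add: "ray y m (a + b) = ray y m a + ray (y + a * ell m) m b"
proof -
  let ?g = "\<lambda>s. ustep (y + s * ell m) m"
  have "ray y m (a + b) = ray y m a + signed_sum ?g a (a + b)"
    unfolding ray_def using signed_sum_add[of ?g 0 a "a + b"] by simp
  also have "signed_sum ?g a (a + b) = ray (y + a * ell m) m b"
    unfolding ray_def using signed_sum_shift[of ?g a "a + b" a] by (simp add: algebra_simps)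
  finally show ?thesis .
qed

lemma ray_0 [simp]: "ray y m 0 = 0" unfolding ray_def by simp

lemma ray_1 [simp]: "ray y m 1 = ustep y m" unfolding ray_def by simp

lemma ray_periodic: "ray (y + int n * c) m a = ray y m a"
proof -
  have "ustep (y + int n * c + s * ell m) m = ustep (y + s * ell m) m" for s
    unfolding ustep_def using vert_periodic[of "y + s * ell m" c] vert_periodic[of "y + s * ell m + ell m" c]
    by (simp add: algebra_simps)
  then show ?thesis unfolding ray_def by simp
qed

text \<open>A unit square spanned by steps of types \<open>{j}\<close> and \<open>{m}\<close> is the difference of the two triangles
  of the flags \<open>{j} \<subset> {j,m}\<close> and \<open>{m} \<subset> {j,m}\<close>; if \<open>{j,m}\<close> is everything (\<open>k = 2\<close>), both
  paths around the square run back and forth along one edge.\<close>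

lemma unit_square_boundary:
  assumes "j < k" "m < k" "j \<noteq> m"
  shows "ustep z j + ustep (z + ell j) m - ustep z m - ustep (z + ell m) j \<in> boundaries"
proof -
  have jm: "lsum {j, m} = ell j + ell m" "lsum {j} = ell j" "lsum {m} = ell m"
    using assms(3) by (simp_all add: lsum_def)
  have corner: "vert (z + ell j + ell m) = vert (z + lsum {j, m})" "vert (z + ell m + ell j) = vert (z + lsum {j, m})"
    unfolding jm by (simp_all add: algebra_simps)
  show ?thesis
  proof (cases "{j, m} = {0..<k}")
    case True
    then have "vert (z + lsum {j, m}) = vert z" using n_eq_lsum vert_periodic[of z 1] by simp
    then show ?thesis unfolding ustep_def corner using zero_in_boundaries
      by (simp add: arc_swap[of "vert z"])
  next
    case False
    have "{j} \<subseteq> {j, m}" "{m} \<subseteq> {j, m}" "{j, m} \<subseteq> {0..<k}" "{j} \<noteq> {j, m}" "{m} \<noteq> {j, m}"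
      using assms by auto
    then have "arc (vert z) (vert (z + lsum {j})) + arc (vert (z + lsum {j})) (vert (z + lsum {j, m}))
        + arc (vert (z + lsum {j, m})) (vert z)
      - (arc (vert z) (vert (z + lsum {m})) + arc (vert (z + lsum {m})) (vert (z + lsum {j, m}))
        + arc (vert (z + lsum {j, m})) (vert z)) \<in> boundaries"
      using False by (intro boundaries_diff flag_triangle_boundary) auto
    then show ?thesis unfolding ustep_def corner jm by (simp add: diff_diff_eq)
  qed
qed

definition square_defect :: "nat \<Rightarrow> nat \<Rightarrow> int \<Rightarrow> int \<Rightarrow> int \<Rightarrow> nat \<Rightarrow> nat \<Rightarrow> int" where
  "square_defect j m z a b = ray z j a + ray (z + a * ell j) m b - ray z m b - ray (z + b * ell m) j a"

lemma square_defect_add_left: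
  "square_defect j m z (a + 1) b - square_defect j m z a b = square_defect j m (z + a * ell j) 1 b"
  unfolding square_defect_def
  using ray_add[of z j a 1] ray_add[of "z + b * ell m" j a 1]
  by (simp add: algebra_simps)

lemma square_defect_add_right:
  "square_defect j m z a (b + 1) - square_defect j m z a b = square_defect j m (z + b * ell m) a 1"
  unfolding square_defect_def
  using ray_add[of z m b 1] ray_add[of "z + a * ell j" m b 1]
  by (simp add: algebra_simps)

lemma square_defect_0_left [simp]: "square_defect j m z 0 b = 0"
  and square_defect_0_right [simp]: "square_defect j m z a 0 = 0"
  unfolding square_defect_def by simp_all

lemma square_defect_boundary:
  assumes "j < k" "m < k" "j \<noteq> m"
  shows "square_defect j m z a b \<in> boundaries"
proof -
  note subgroup = zero_in_boundaries boundaries_add boundaries_diff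
  have unit: "square_defect j m z' 1 1 \<in> boundaries" for z'
    unfolding square_defect_def using unit_square_boundary[OF assms] by simp
  have left_1: "square_defect j m z' 1 b' \<in> boundaries" for z' b'
    by (rule int_induct_by_increments[where f = "square_defect j m z' 1", OF subgroup])
      (simp_all add: square_defect_add_right zero_in_boundaries unit)
  show ?thesis
    by (rule int_induct_by_increments[where f = "\<lambda>a. square_defect j m z a b", OF subgroup])
      (simp_all add: square_defect_add_left zero_in_boundaries left_1)
qed

lemma rays_commute:
  assumes "j < k" "m < k" "j \<noteq> m"
  shows "ray z j a + ray (z + a * ell j) m b \<approx> ray z m b + ray (z + b * ell m) j a"
  using square_defect_boundary[OF assms, of z a b]
  unfolding homologous_def square_defect_def by (simp add: algebra_simps)

primrec stair :: "int \<Rightarrow> nat list \<Rightarrow> (nat \<Rightarrow> int) \<Rightarrow> nat \<Rightarrow> nat \<Rightarrow> int" where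
  "stair x [] v = 0"
| "stair x (m # ms) v = ray x m (v m) + stair (x + v m * ell m) ms v"

definition sdisp :: "nat list \<Rightarrow> (nat \<Rightarrow> int) \<Rightarrow> int" where
  "sdisp ms v = (\<Sum>m\<leftarrow>ms. v m * ell m)"

lemma sdisp_simps [simp]:
  "sdisp [] v = 0" "sdisp (m # ms) v = v m * ell m + sdisp ms v"
  "sdisp (ms1 @ ms2) v = sdisp ms1 v + sdisp ms2 v"
  unfolding sdisp_def by simp_all

lemma stair_append: "stair x (ms1 @ ms2) v = stair x ms1 v + stair (x + sdisp ms1 v) ms2 v"
  by (induction ms1 arbitrary: x) (simp_all add: algebra_simps)

lemma stair_cong: "(\<And>i. i \<in> set ms \<Longrightarrow> v i = w i) \<Longrightarrow> stair x ms v = stair x ms w"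
  by (induction ms arbitrary: x) simp_all

lemma sdisp_cong: "(\<And>i. i \<in> set ms \<Longrightarrow> v i = w i) \<Longrightarrow> sdisp ms v = sdisp ms w"
  by (induction ms) simp_all

lemma stair_zero [simp]: "stair x ms (\<lambda>_. 0) = 0"
  by (induction ms arbitrary: x) simp_all

lemma stair_periodic: "stair (x + int n * c) ms v = stair x ms v"
proof (induction ms arbitrary: x)
  case (Cons m ms)
  have "x + int n * c + v m * ell m = (x + v m * ell m) + int n * c" by simp
  then show ?case by (simp only: stair.simps ray_periodic Cons.IH)
qed simp

lemma ray_stair_commute:
  assumes "j < k" "j \<notin> set ms" "set ms \<subseteq> {0..<k}"
  shows "ray x j a + stair (x + a * ell j) ms v \<approx> stair x ms v + ray (x + sdisp ms v) j a"
  using assms(2,3)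
proof (induction ms arbitrary: x)
  case Nil then show ?case using homologous_refl by simp
next
  case (Cons m ms)
  have m: "m < k" "j \<noteq> m" using Cons.prems by auto
  define x' where "x' = x + v m * ell m"
  have "x + a * ell j + v m * ell m = x' + a * ell j" unfolding x'_def by simp
  then have "ray x j a + stair (x + a * ell j) (m # ms) v
      = (ray x j a + ray (x + a * ell j) m (v m)) + stair (x' + a * ell j) ms v"
    by (simp only: stair.simps add.assoc)
  also have "\<dots> \<approx> (ray x m (v m) + ray x' j a) + stair (x' + a * ell j) ms v"
    unfolding x'_def by (intro homologous_add rays_commute assms(1) m homologous_refl)
  also have "\<dots> = ray x m (v m) + (ray x' j a + stair (x' + a * ell j) ms v)" by (simp add: add.assoc)
  also have "\<dots> \<approx> ray x m (v m) + (stair x' ms v + ray (x' + sdisp ms v) j a)"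
    using Cons.prems by (intro homologous_add homologous_refl Cons.IH) auto
  also have "\<dots> = stair x (m # ms) v + ray (x + sdisp (m # ms) v) j a"
    unfolding x'_def by (simp add: add.assoc)
  finally show ?case .
qed

definition staircase :: "int \<Rightarrow> (nat \<Rightarrow> int) \<Rightarrow> nat \<Rightarrow> nat \<Rightarrow> int" where
  "staircase x v = stair x [0..<k] v"

definition disp :: "(nat \<Rightarrow> int) \<Rightarrow> int" where
  "disp v = (\<Sum>m<k. v m * ell m)"

lemma sdisp_upt: "sdisp [0..<k] v = disp v"
  unfolding sdisp_def disp_def by (simp add: sum_list_sum_nth atLeast0LessThan)

lemma staircase_cong: "(\<And>i. i < k \<Longrightarrow> v i = w i) \<Longrightarrow> staircase x v = staircase x w"
  unfolding staircase_def by (rule stair_cong) simp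

lemma staircase_periodic: "staircase (x + int n * c) v = staircase x v"
  unfolding staircase_def by (rule stair_periodic)

lemma staircase_zero [simp]: "staircase x (\<lambda>_. 0) = 0"
  unfolding staircase_def by simp

lemma disp_update: assumes "m < k" shows "disp (v(m := v m + c)) = disp v + c * ell m"
proof -
  have "disp (v(m := v m + c)) = (\<Sum>i<k. v i * ell i + (if i = m then c * ell m else 0))"
    unfolding disp_def by (rule sum.cong) (auto simp: algebra_simps)
  also have "\<dots> = disp v + c * ell m" unfolding disp_def using assms by (simp add: sum.distrib)
  finally show ?thesis .
qed

lemma disp_chi: assumes "I \<subseteq> {0..<k}" shows "disp (chi I) = lsum I"
proof -
  have "disp (chi I) = (\<Sum>i<k. if i \<in> I then ell i else 0)"
    unfolding disp_def chi_def by (rule sum.cong) auto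
  also have "\<dots> = (\<Sum>i\<in>{..<k} \<inter> I. ell i)" by (simp add: sum.inter_restrict)
  also have "{..<k} \<inter> I = I" using assms by auto
  finally show ?thesis unfolding lsum_def .
qed

lemma staircase_extend:
  assumes j: "j < k"
  shows "staircase x v + ray (x + disp v) j a \<approx> staircase x (v(j := v j + a))"
proof -
  define v' where "v' = v(j := v j + a)"
  have v'j: "v' j = v j + a" unfolding v'_def by simp
  define pre where "pre = [0..<j]"
  define post where "post = [Suc j..<k]"
  have split: "[0..<k] = pre @ j # post"
    unfolding pre_def post_def using j upt_add_eq_append[of 0 j "k - j"] upt_conv_Cons[OF j] by simp
  have j_notin: "j \<notin> set pre" "j \<notin> set post" and post: "set post \<subseteq> {0..<k}"
    unfolding pre_def post_def by auto
  have pre_v': "stair x pre v' = stair x pre v" "sdisp pre v' = sdisp pre v"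
    using j_notin(1) by (auto simp: v'_def intro!: stair_cong sdisp_cong)
  have post_v': "stair y post v' = stair y post v" for y
    using j_notin(2) by (auto simp: v'_def intro!: stair_cong)
  define y where "y = x + sdisp pre v"
  define z where "z = y + v j * ell j"
  have "staircase x v + ray (x + disp v) j a
      = stair x pre v + (ray y j (v j) + (stair z post v + ray (z + sdisp post v) j a))"
    unfolding staircase_def split stair_append y_def z_def sdisp_upt[symmetric]
    by (simp add: add.assoc algebra_simps)
  also have "\<dots> \<approx> stair x pre v + (ray y j (v j) + (ray z j a + stair (z + a * ell j) post v))"
    by (intro homologous_add homologous_refl homologous_sym[OF ray_stair_commute[OF j j_notin(2) post]])
  also have "\<dots> = staircase x v'"
  proof -
    have "staircase x v' = stair x pre v + (ray y j (v j + a) + stair (z + a * ell j) post v)"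
      unfolding staircase_def split stair_append pre_v' y_def z_def
      by (simp add: post_v' v'j algebra_simps)
    then show ?thesis unfolding z_def ray_add by (simp add: add.assoc)
  qed
  finally show ?thesis unfolding v'_def .
qed

lemma staircase_add: "staircase x v + staircase (x + disp v) w \<approx> staircase x (\<lambda>i. v i + w i)"
proof -
  have "staircase x v + stair (x + disp v) ms w \<approx> staircase x (\<lambda>i. v i + (if i \<in> set ms then w i else 0))"
    if "distinct ms" "set ms \<subseteq> {0..<k}" for ms
    using that
  proof (induction ms arbitrary: v)
    case Nil then show ?case using homologous_refl by simp
  next
    case (Cons m ms)
    have m: "m < k" "m \<notin> set ms" using Cons.prems by auto
    define v' where "v' = v(m := v m + w m)"
    have "staircase x v + stair (x + disp v) (m # ms) w
        = (staircase x v + ray (x + disp v) m (w m)) + stair (x + disp v') ms w"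
      unfolding v'_def disp_update[OF m(1)] by (simp add: add.assoc)
    also have "\<dots> \<approx> staircase x v' + stair (x + disp v') ms w"
      unfolding v'_def by (rule homologous_add[OF staircase_extend[OF m(1)] homologous_refl])
    also have "\<dots> \<approx> staircase x (\<lambda>i. v' i + (if i \<in> set ms then w i else 0))"
      using Cons.prems by (intro Cons.IH) auto
    also have "(\<lambda>i. v' i + (if i \<in> set ms then w i else 0)) = (\<lambda>i. v i + (if i \<in> set (m # ms) then w i else 0))"
      unfolding v'_def using m(2) by (auto simp: fun_eq_iff)
    finally show ?case .
  qed
  from this[of "[0..<k]"]
  have "staircase x v + staircase (x + disp v) w \<approx> staircase x (\<lambda>i. v i + (if i < k then w i else 0))"
    unfolding staircase_def[of "x + disp v"] by simp
  also have "staircase x (\<lambda>i. v i + (if i < k then w i else 0)) = staircase x (\<lambda>i. v i + w i)"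
    by (rule staircase_cong) simp
  finally show ?thesis .
qed

text \<open>Adding an index \<open>m\<close> to \<open>J\<close> extends the staircase by one step, which closes a triangle with the
  edges of types \<open>J\<close> and \<open>J \<union> {m}\<close> starting at \<open>x\<close>.\<close>

lemma edge_staircase:
  assumes "I \<subseteq> {0..<k}" "I \<noteq> {}" "I \<noteq> {0..<k}"
  shows "arc (vert x) (vert (x + lsum I)) \<approx> staircase x (chi I)"
proof -
  have "finite I" using assms(1) finite_subset by blast
  then show ?thesis using assms(2) assms(1,3)
  proof (induction I rule: finite_ne_induct)
    case (singleton m)
    have "staircase x (chi {m}) = staircase x ((\<lambda>_. 0)(m := 0 + 1))"
      by (rule staircase_cong) (simp add: chi_def)
    also have "\<dots> \<approx> staircase x (\<lambda>_. 0) + ray (x + disp (\<lambda>_. 0)) m 1"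
      using singleton by (intro homologous_sym[OF staircase_extend]) auto
    also have "\<dots> = arc (vert x) (vert (x + lsum {m}))" by (simp add: disp_def ustep_def lsum_def)
    finally show ?case by (rule homologous_sym)
  next
    case (insert m J)
    have m: "m < k" and J: "J \<subseteq> {0..<k}" "J \<noteq> {0..<k}" using insert by auto
    have lsum_insert: "lsum (insert m J) = lsum J + ell m" unfolding lsum_def using insert.hyps by simp
    let ?xJ = "vert (x + lsum J)" and ?xmJ = "vert (x + lsum (insert m J))"
    have step: "arc ?xJ ?xmJ = ray (x + disp (chi J)) m 1"
      using disp_chi[OF J(1)] by (simp add: ustep_def lsum_insert add.assoc)
    have "arc (vert x) ?xJ + arc ?xJ ?xmJ + arc ?xmJ (vert x) \<in> boundaries"
      by (rule flag_triangle_boundary) (use insert in auto)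
    then have "arc (vert x) ?xmJ \<approx> arc (vert x) ?xJ + arc ?xJ ?xmJ"
      unfolding homologous_def using boundaries_uminus by (force simp: arc_swap[of ?xmJ] algebra_simps)
    also have "\<dots> \<approx> staircase x (chi J) + ray (x + disp (chi J)) m 1"
      unfolding step using insert.IH J by (intro homologous_add homologous_refl) auto
    also have "\<dots> \<approx> staircase x ((chi J)(m := chi J m + 1))" by (rule staircase_extend[OF m])
    also have "(chi J)(m := chi J m + 1) = chi (insert m J)"
      using insert.hyps unfolding chi_def by (auto simp: fun_eq_iff)
    finally show ?case .
  qed
qed

lemma disp_zero [simp]: "disp (\<lambda>_. 0) = 0" unfolding disp_def by simp

section \<open>Cycles on which \<open>\<omega>\<close> vanishes are boundaries\<close>

lemma disp_scale: "disp (\<lambda>i. c * y i) = c * disp y"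
  unfolding disp_def by (simp add: sum_distrib_left algebra_simps)

lemma disp_sum: "disp (\<lambda>i. \<Sum>s\<in>S. g s i) = (\<Sum>s\<in>S. disp (g s))"
  unfolding disp_def by (simp add: sum_distrib_right sum.swap[of _ "{..<k}"])

lemma disp_add_diff: "disp (\<lambda>i. a i + b i - c i) = disp a + disp b - disp c"
  unfolding disp_def by (simp add: sum.distrib sum_subtractf algebra_simps)

text \<open>A staircase from the origin whose displacement is a multiple of \<open>n\<close> is a closed path.\<close>

definition loop :: "(nat \<Rightarrow> int) \<Rightarrow> nat \<Rightarrow> nat \<Rightarrow> int" where "loop y = staircase 0 y"

lemma loop_zero [simp]: "loop (\<lambda>_. 0) = 0" unfolding loop_def by simp

lemma loop_add:
  assumes "int n dvd disp y1"
  shows "loop y1 + loop y2 \<approx> loop (\<lambda>i. y1 i + y2 i)"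
proof -
  obtain c where "disp y1 = int n * c" using assms by blast
  then have "staircase (0 + disp y1) y2 = loop y2" unfolding loop_def using staircase_periodic[of 0 c y2] by simp
  then show ?thesis using staircase_add[of 0 y1 y2] unfolding loop_def by simp
qed

lemma loop_scale:
  assumes "int n dvd disp y"
  shows "loop (\<lambda>i. c * y i) \<approx> cscale c (loop y)"
proof -
  have "loop (\<lambda>i. c * y i) + loop y \<approx> loop (\<lambda>i. (c + 1) * y i)" for c
    using loop_add[of "\<lambda>i. c * y i" y] assms by (simp add: disp_scale algebra_simps)
  then have increment: "loop (\<lambda>i. (c + 1) * y i) - cscale (c + 1) (loop y) - (loop (\<lambda>i. c * y i) - cscale c (loop y))
      \<in> boundaries" for c
    using boundaries_uminus unfolding homologous_def by (force simp: cscale_add_left cscale_1 algebra_simps)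
  have "loop (\<lambda>i. c * y i) - cscale c (loop y) \<in> boundaries"
    by (rule int_induct_by_increments[where f = "\<lambda>c. loop (\<lambda>i. c * y i) - cscale c (loop y)",
          OF zero_in_boundaries boundaries_add boundaries_diff])
      (simp_all add: cscale_0_left zero_in_boundaries increment)
  then show ?thesis unfolding homologous_def .
qed

lemma loop_sum:
  assumes "finite S" "\<And>s. s \<in> S \<Longrightarrow> c s \<noteq> 0 \<Longrightarrow> int n dvd disp (f s)"
  shows "(\<Sum>s\<in>S. cscale (c s) (loop (f s))) \<approx> loop (\<lambda>i. \<Sum>s\<in>S. c s * f s i)"
  using assms
proof (induction S rule: finite_induct)
  case empty then show ?case using homologous_refl by (simp add: loop_def)
next
  case (insert s F)
  have dvd: "int n dvd disp (\<lambda>i. c s * f s i)"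
    using insert.prems by (cases "c s = 0") (simp_all add: disp_scale)
  have scale: "cscale (c s) (loop (f s)) \<approx> loop (\<lambda>i. c s * f s i)"
  proof (cases "c s = 0")
    case True then show ?thesis using homologous_refl by (simp add: cscale_0_left loop_def)
  next
    case False then show ?thesis using insert.prems by (intro homologous_sym[OF loop_scale]) auto
  qed
  have "(\<Sum>t\<in>insert s F. cscale (c t) (loop (f t))) = cscale (c s) (loop (f s)) + (\<Sum>t\<in>F. cscale (c t) (loop (f t)))"
    using insert.hyps by simp
  also have "\<dots> \<approx> loop (\<lambda>i. c s * f s i) + loop (\<lambda>i. \<Sum>t\<in>F. c t * f t i)"
    using insert.prems by (intro homologous_add scale insert.IH) auto
  also have "\<dots> \<approx> loop (\<lambda>i. c s * f s i + (\<Sum>t\<in>F. c t * f t i))" by (rule loop_add[OF dvd])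
  also have "(\<lambda>i. c s * f s i + (\<Sum>t\<in>F. c t * f t i)) = (\<lambda>i. \<Sum>t\<in>insert s F. c t * f t i)"
    using insert.hyps by simp
  finally show ?case .
qed

text \<open>Split \<open>[0..<k]\<close> into \<open>J = [0..<k-1]\<close> and \<open>{k-1}\<close>: the loop \<open>P(0,(1,\<dots>,1))\<close> is homologous to
  the edge of type \<open>J\<close> from \<open>0\<close> followed by the edge of type \<open>{k-1}\<close> back to \<open>0\<close>, which are opposite.\<close>

lemma loop_ones_homologous_0: "loop (\<lambda>_. 1) \<approx> 0"
proof -
  define J where "J = {0..<k - 1}"
  have J: "J \<subseteq> {0..<k}" "J \<noteq> {}" "J \<noteq> {0..<k}" unfolding J_def using length_ge_2 by auto
  have S: "{k - 1} \<subseteq> {0..<k}" "{k - 1} \<noteq> {}" using length_ge_2 by auto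
  have "(0::nat) \<in> {0..<k}" "(0::nat) \<notin> {k - 1}" using length_ge_2 by auto
  then have S': "{k - 1} \<noteq> {0..<k}" by blast
  have "{0..<k} = J \<union> {k - 1}" unfolding J_def using length_ge_2 by auto
  then have "lsum J + lsum {k - 1} = int n"
    using n_eq_lsum unfolding lsum_def J_def by (simp add: sum.union_disjoint)
  then have closes: "vert (lsum J + lsum {k - 1}) = vert 0" using vert_periodic[of 0 1] by simp
  have "loop (\<lambda>_. 1) = staircase 0 (\<lambda>i. chi J i + chi {k - 1} i)"
    unfolding loop_def by (rule staircase_cong) (auto simp: chi_def J_def)
  also have "\<dots> \<approx> staircase 0 (chi J) + staircase (lsum J) (chi {k - 1})"
    using staircase_add[of 0 "chi J" "chi {k - 1}"] disp_chi[OF J(1)] by (simp add: homologous_sym)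
  also have "\<dots> \<approx> arc (vert 0) (vert (lsum J)) + arc (vert (lsum J)) (vert 0)"
    using homologous_add[OF edge_staircase[OF J, of 0] edge_staircase[OF S S', of "lsum J"]] closes
    by (simp add: homologous_sym)
  also have "\<dots> = 0" by (simp add: arc_swap[of "vert (lsum J)"])
  finally show ?thesis .
qed

text \<open>With \<open>\<langle>\<beta>,l\<rangle> = 1\<close> the staircase \<open>P(0,w\<beta>)\<close> leads from \<open>0\<close> to the vertex \<open>w\<close>, so up to a loop every
  edge is homologous to the detour through the origin.\<close>

lemma edge_homologous_via_origin:
  assumes beta: "disp \<beta> = 1" and uv: "edge L u v"
  defines "\<delta> \<equiv> \<lambda>i. int u * \<beta> i + chi (Ltype L u v) i - int v * \<beta> i"
  shows "arc u v \<approx> staircase 0 (\<lambda>i. int v * \<beta> i) - staircase 0 (\<lambda>i. int u * \<beta> i) + loop \<delta>"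
    and "int n dvd disp \<delta>"
proof -
  define I where "I = Ltype L u v"
  have simplex: "tonnetz_simplex L {u, v}" "u \<noteq> v" using uv unfolding edge_def by auto
  note I = edge_Ltype[OF simplex, folded I_def]
  have "u < n" "v < n" using simplex_vertex_less[OF simplex(1)] by auto
  define lu where "lu = (\<lambda>i. int u * \<beta> i)"
  define lv where "lv = (\<lambda>i. int v * \<beta> i)"
  have dlu: "disp lu = int u" and dlv: "disp lv = int v"
    unfolding lu_def lv_def disp_scale beta by simp_all
  have d\<delta>: "disp \<delta> = int u + lsum I - int v"
    unfolding \<delta>_def I_def[symmetric] using disp_add_diff[of lu "chi I" lv] dlu dlv disp_chi[OF I(1)]
    unfolding lu_def lv_def by simp
  have cong: "[int u + lsum I = int v] (mod int n)"
    using cong_sym[OF cong_add[OF cong_refl[of "int u"] I(4)]] by simp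
  then show "int n dvd disp \<delta>" unfolding d\<delta> using cong_iff_dvd_diff by blast
  then obtain c where c: "disp \<delta> = int n * c" by blast
  have "(int u + lsum I) mod int n = int v" using cong \<open>v < n\<close> unfolding cong_def by simp
  then have "vert (int u + lsum I) = v" unfolding vert_def by simp
  then have "arc u v \<approx> staircase (int u) (chi I)"
    using edge_staircase[OF I(1-3), of "int u"] vert_int[OF \<open>u < n\<close>] by simp
  also have "staircase (int u) (chi I) = (staircase 0 lu + staircase (0 + disp lu) (chi I)) - staircase 0 lu"
    using dlu by simp
  also have "\<dots> \<approx> staircase 0 (\<lambda>i. lu i + chi I i) - staircase 0 lu"
    by (rule homologous_diff[OF staircase_add homologous_refl])
  also have "(\<lambda>i. lu i + chi I i) = (\<lambda>i. \<delta> i + lv i)" unfolding lu_def lv_def \<delta>_def I_def by auto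
  also have "staircase 0 (\<lambda>i. \<delta> i + lv i) - staircase 0 lu \<approx> loop \<delta> + staircase 0 lv - staircase 0 lu"
    using homologous_sym[OF staircase_add[of 0 \<delta> lv]] staircase_periodic[of 0 c lv] c
    unfolding loop_def by (intro homologous_diff homologous_refl) simp
  also have "loop \<delta> + staircase 0 lv - staircase 0 lu = staircase 0 lv - staircase 0 lu + loop \<delta>"
    by simp
  finally show "arc u v \<approx> staircase 0 (\<lambda>i. int v * \<beta> i) - staircase 0 (\<lambda>i. int u * \<beta> i) + loop \<delta>"
    unfolding lu_def lv_def .
qed

lemma edge_less: assumes "edge L u v" shows "u < v" "u < n" "v < n"
  using assms simplex_vertex_less[of "{u, v}"] unfolding edge_def by auto

lemma chain1_decomp:
  assumes "chain1 L z"
  shows "z = (\<Sum>u<n. \<Sum>v<n. cscale (z u v) (arc u v))"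
proof (intro ext)
  fix a b
  have support: "z u v \<noteq> 0 \<Longrightarrow> edge L u v" for u v using assms unfolding chain1_def by blast
  have "z u v * arc u v a b = (if u = a \<and> v = b then z u v else 0)" for u v
    using edge_less(1)[OF support, of u v] by (cases "z u v = 0") (auto simp: arc_def)
  then have "(\<Sum>u<n. \<Sum>v<n. cscale (z u v) (arc u v)) a b = (\<Sum>u<n. \<Sum>v<n. if u = a \<and> v = b then z u v else 0)"
    by (simp add: cscale_def sum_fun_apply)
  also have "\<dots> = z a b"
  proof (cases "a < n \<and> b < n")
    case True
    have "(\<Sum>v<n. if u = a \<and> v = b then z u v else 0) = (if u = a then z a b else 0)" for u
      using True by (cases "u = a") simp_all
    then show ?thesis using True by simp
  next
    case False
    then have "z a b = 0" using edge_less(2,3)[OF support, of a b] by blast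
    moreover have "(\<Sum>u<n. \<Sum>v<n. if u = a \<and> v = b then z u v else 0) = 0"
      using False by (intro sum.neutral ballI) auto
    ultimately show ?thesis by simp
  qed
  finally show "z a b = (\<Sum>u<n. \<Sum>v<n. cscale (z u v) (arc u v)) a b" ..
qed

lemma cycle_gradient:
  fixes g :: "nat \<Rightarrow> 'a::comm_ring_1"
  assumes "cycle1 L z"
  shows "(\<Sum>u<n. \<Sum>v<n. of_int (z u v) * (g v - g u)) = 0"
proof -
  have bd: "(\<Sum>u<n. z u w) = (\<Sum>v<n. z w v)" for w using assms unfolding cycle1_def bd1_def by simp
  have "(\<Sum>u<n. \<Sum>v<n. of_int (z u v) * g v) = (\<Sum>w<n. g w * of_int (\<Sum>u<n. z u w))"
    by (subst sum.swap) (simp add: sum_distrib_left mult.commute)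
  moreover have "(\<Sum>u<n. \<Sum>v<n. of_int (z u v) * g u) = (\<Sum>w<n. g w * of_int (\<Sum>v<n. z w v))"
    by (simp add: sum_distrib_left mult.commute)
  ultimately show ?thesis by (simp add: right_diff_distrib sum_subtractf bd)
qed

definition type_count :: "(nat \<Rightarrow> nat \<Rightarrow> int) \<Rightarrow> nat \<Rightarrow> int" where
  "type_count z i = (\<Sum>u<n. \<Sum>v<n. z u v * chi (Ltype L u v) i)"

lemma omega_eval_eq_dev: "i < k \<Longrightarrow> omega_eval L z i = dev k (type_count z) i"
  unfolding omega_eval_def omega_vec_def omega_eq_dev dev_def type_count_def
  by (simp add: sum_distrib_left sum_subtractf right_diff_distrib algebra_simps sum.swap[of _ "{..<k}"])

lemma type_count_const:
  assumes "omega_eval L z = (\<lambda>_. 0)" "i < k"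
  shows "type_count z i = type_count z 0"
proof (rule dev_eq_0_imp_const)
  show "dev k (type_count z) j = 0" if "j < k" for j
    using omega_eval_eq_dev[OF that, of z] fun_cong[OF assms(1), of j] by simp
qed (use assms(2) length_ge_2 in auto)

lemma cycle_homologous_loop:
  assumes cycle: "cycle1 L z" and beta: "disp \<beta> = 1"
  shows "z \<approx> loop (type_count z)"
proof -
  have support: "z u v \<noteq> 0 \<Longrightarrow> edge L u v" for u v using cycle unfolding cycle1_def chain1_def by blast
  define \<gamma> where "\<gamma> w = staircase 0 (\<lambda>i. int w * \<beta> i)" for w
  define \<delta> where "\<delta> u v = (\<lambda>i. int u * \<beta> i + chi (Ltype L u v) i - int v * \<beta> i)" for u v
  note via_origin = edge_homologous_via_origin[OF beta support, folded \<gamma>_def \<delta>_def]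
  have edge: "cscale (z u v) (arc u v) \<approx> cscale (z u v) (\<gamma> v - \<gamma> u) + cscale (z u v) (loop (\<delta> u v))" for u v
    using via_origin(1)[of u v] homologous_refl
    by (cases "z u v = 0") (auto simp: cscale_0_left cscale_add_right[symmetric] intro: homologous_cscale)
  have "int n dvd z u v * disp (\<delta> u v)" for u v using via_origin(2) by (cases "z u v = 0") auto
  then have dvd_row: "int n dvd disp (\<lambda>i. \<Sum>v<n. z u v * \<delta> u v i)" for u
    by (simp add: disp_sum disp_scale dvd_sum)
  have gradient_0: "(\<Sum>u<n. \<Sum>v<n. cscale (z u v) (\<gamma> v - \<gamma> u)) = 0"
    using cycle_gradient[OF cycle, of "\<lambda>w. \<gamma> w a b" for a b]
    by (intro ext) (simp add: cscale_def sum_fun_apply)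
  have count: "(\<Sum>u<n. 1 * (\<Sum>v<n. z u v * \<delta> u v i)) = type_count z i" for i
    using cycle_gradient[OF cycle, of "\<lambda>w. int w * \<beta> i"]
    unfolding type_count_def \<delta>_def by (simp add: algebra_simps sum.distrib sum_subtractf)
  have "z = (\<Sum>u<n. \<Sum>v<n. cscale (z u v) (arc u v))" by (rule chain1_decomp) (use cycle cycle1_def in blast)
  also have "\<dots> \<approx> (\<Sum>u<n. \<Sum>v<n. cscale (z u v) (\<gamma> v - \<gamma> u) + cscale (z u v) (loop (\<delta> u v)))"
    by (intro homologous_sum finite_lessThan edge)
  also have "\<dots> = (\<Sum>u<n. \<Sum>v<n. cscale (z u v) (loop (\<delta> u v)))"
    using gradient_0 by (simp add: sum.distrib)
  also have "\<dots> \<approx> (\<Sum>u<n. cscale 1 (loop (\<lambda>i. \<Sum>v<n. z u v * \<delta> u v i)))"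
    unfolding cscale_1 using via_origin(2) by (intro homologous_sum finite_lessThan loop_sum) auto
  also have "\<dots> \<approx> loop (\<lambda>i. \<Sum>u<n. 1 * (\<Sum>v<n. z u v * \<delta> u v i))"
    using dvd_row by (intro loop_sum) auto
  finally show ?thesis unfolding count .
qed

lemma cycle_omega_0_boundary:
  assumes "cycle1 L z" "omega_eval L z = (\<lambda>_. 0)"
  shows "z \<in> boundaries"
proof -
  obtain \<beta> where "(\<Sum>i<k. \<beta> i * int (L!i)) = int (Gcd (set L))" using bezout_Gcd_list by blast
  then have "disp \<beta> = 1" using L_reduced unfolding disp_def ell_def reduced_def by simp
  then have "z \<approx> loop (type_count z)" by (rule cycle_homologous_loop[OF assms(1)])
  also have "loop (type_count z) = loop (\<lambda>i. type_count z 0 * 1)"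
    unfolding loop_def using type_count_const[OF assms(2)] by (intro staircase_cong) simp
  also have "\<dots> \<approx> cscale (type_count z 0) (loop (\<lambda>_. 1))"
    using n_eq_lsum by (intro loop_scale) (simp add: disp_def lsum_def atLeast0LessThan)
  also have "\<dots> \<approx> 0" using homologous_cscale[OF loop_ones_homologous_0] by (simp add: cscale_0_right)
  finally show ?thesis unfolding homologous_def by simp
qed

end

theorem proposition5p4:
  fixes L :: "nat list"
  assumes "length L \<ge> 2"
    and "\<forall>l\<in>set L. l > 0"
    and "generic L"
    and "reduced L"
  shows "(\<forall>u v. tonnetz_simplex L {u, v} \<and> u \<noteq> v \<longrightarrow> omega_vec L u v \<in> Lambda (length L))
    \<and> (\<forall>d. chain2 L d \<longrightarrow> omega_eval L (bd2 L d) = (\<lambda>_. 0))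
    \<and> (\<forall>z. cycle1 L z \<longrightarrow> omega_eval L z = (\<lambda>_. 0) \<longrightarrow> (\<exists>d. chain2 L d \<and> z = bd2 L d))"
proof -
  interpret tonnetz L using assms by unfold_locales
  show ?thesis
    using omega_vec_in_Lambda omega_eval_bd2 cycle_omega_0_boundary unfolding boundaries_def by blast
qed

end
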